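(* Let $\gamma:[0,l]\times[0,w)\to E_1^4$, $(s,t)\mapsto\gamma(s,t)$, be a smooth inextensible one-parameter family of partially null curves in $E_1^4$ parametrized by arclength ($\|\partial\gamma/\partial s\|\equiv1$), with Frenet frame $\{T,N,B_1,B_2\}$, curvatures $k_1,k_2$ (and $k_3\equiv0$), and write $$\frac{\partial\gamma}{\partial t}=\beta_1T+\beta_2N+\beta_3B_1+\beta_4B_2$$ with smooth scalar functions $\beta_i$. Put $\psi_1=\langle\frac{\partial N}{\partial t},B_1\rangle$ and $\psi_3=\langle\frac{\partial B_1}{\partial t},B_2\rangle$. Then, at points where $\frac{\partial\beta_4}{\partial s}\neq0$, $$k_1=-\frac{\partial\psi_1/\partial s}{\partial\beta_4/\partial s},$$ and at points where $\psi_1\neq0$, $$k_2=\frac{1}{\psi_1}\frac{\partial\psi_3}{\partial s}.$$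
   Context: $E_1^4$ is $\mathbb{R}^4$ with the Lorentzian metric $\langle x,y\rangle=-x_1y_1+x_2y_2+x_3y_3+x_4y_4$ and $\|x\|=\sqrt{|\langle x,x\rangle|}$. A partially null curve is a spacelike curve whose first binormal is a null vector. For such a curve parametrized by arclength $s$, its Frenet frame $\{T,N,B_1,B_2\}$ ($T=\partial\gamma/\partial s$) satisfies $\langle T,T\rangle=\langle N,N\rangle=1$, $\langle B_1,B_1\rangle=\langle B_2,B_2\rangle=0$, $\langle B_1,B_2\rangle=1$, all other inner products zero, and the Frenet equations $T'=k_1N$, $N'=-k_1T+k_2B_1$, $B_1'=k_3B_1$, $B_2'=-k_2N-k_3B_2$, with $k_3\equiv0$. In the family, each $s\mapsto\gamma(s,t)$ is such a curve and frame and curvatures are smooth in $(s,t)$. The flow is inextensible if $\frac{\partial}{\partial t}\|\partial\gamma/\partial u\|=0$. *)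

theory Defs
  imports "HOL-Analysis.Analysis"
begin

definition lor :: "real^4 \<Rightarrow> real^4 \<Rightarrow> real" where
  "lor x y = - x$1 * y$1 + x$2 * y$2 + x$3 * y$3 + x$4 * y$4"

definition lnorm :: "real^4 \<Rightarrow> real" where
  "lnorm x = sqrt \<bar>lor x x\<bar>"

definition pd_s :: "(real \<times> real \<Rightarrow> 'a::real_normed_vector) \<Rightarrow> real \<times> real \<Rightarrow> 'a" where
  "pd_s F p = vector_derivative (\<lambda>s. F (s, snd p)) (at (fst p))"

definition pd_t :: "(real \<times> real \<Rightarrow> 'a::real_normed_vector) \<Rightarrow> real \<times> real \<Rightarrow> 'a" where
  "pd_t F p = vector_derivative (\<lambda>t. F (fst p, t)) (at (snd p))"

fun Ck_on :: "nat \<Rightarrow> (real \<times> real) set \<Rightarrow> (real \<times> real \<Rightarrow> 'a::real_normed_vector) \<Rightarrow> bool" where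
  "Ck_on 0 U F = continuous_on U F"
| "Ck_on (Suc k) U F =
     (continuous_on U F \<and>
      (\<forall>p\<in>U. (\<lambda>s. F (s, snd p)) differentiable (at (fst p)) \<and>
              (\<lambda>t. F (fst p, t)) differentiable (at (snd p))) \<and>
      Ck_on k U (pd_s F) \<and> Ck_on k U (pd_t F))"

definition smooth_on :: "(real \<times> real) set \<Rightarrow> (real \<times> real \<Rightarrow> 'a::real_normed_vector) \<Rightarrow> bool" where
  "smooth_on U F \<longleftrightarrow> open U \<and> (\<forall>k. Ck_on k U F)"

end

theory Submission
  imports Defs
begin

text \<open>Differentiating in \<open>s\<close>
  and exchanging the order of the partial derivatives, the Frenet equations with \<open>k\<^sub>3 = 0\<close>
  (in particular \<open>B\<^sub>1\<^sub>s = 0\<close>) give \<open>\<partial>\<^sub>s\<psi>\<^sub>1 = \<langle>(N\<^sub>s)\<^sub>t, B\<^sub>1\<rangle> = -k\<^sub>1\<langle>T\<^sub>t, B\<^sub>1\<rangle>\<close> and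
  \<open>\<partial>\<^sub>s\<psi>\<^sub>3 = \<langle>B\<^sub>1\<^sub>t, B\<^sub>2\<^sub>s\<rangle> = -k\<^sub>2\<langle>B\<^sub>1\<^sub>t, N\<rangle> = k\<^sub>2\<psi>\<^sub>1\<close>, where the \<open>t\<close>-derivatives of
  \<open>\<langle>B\<^sub>1, B\<^sub>1\<rangle> = 0\<close> and \<open>\<langle>N, B\<^sub>1\<rangle> = 0\<close> kill the remaining terms. Finally
  \<open>T\<^sub>t = \<partial>\<^sub>s\<gamma>\<^sub>t = \<partial>\<^sub>s(\<Sigma> \<beta>\<^sub>i X\<^sub>i)\<close>, and pairing with the null vector \<open>B\<^sub>1\<close> leaves only
  \<open>\<langle>T\<^sub>t, B\<^sub>1\<rangle> = \<partial>\<^sub>s\<beta>\<^sub>4\<close>.\<close>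

lemma smooth_on_open: "smooth_on U F \<Longrightarrow> open U"
  unfolding smooth_on_def by blast

lemma smooth_on_continuous_on: "smooth_on U F \<Longrightarrow> continuous_on U F"
  unfolding smooth_on_def using Ck_on.simps(1) by blast

lemma smooth_onD:
  assumes "smooth_on U F"
  shows "continuous_on U F"
    and "\<forall>p\<in>U. (\<lambda>s. F (s, snd p)) differentiable (at (fst p)) \<and> (\<lambda>t. F (fst p, t)) differentiable (at (snd p))"
    and "Ck_on k U (pd_s F)" "Ck_on k U (pd_t F)"
  using assms unfolding smooth_on_def by (metis Ck_on.simps(2))+

lemma smooth_on_pd_s: "smooth_on U F \<Longrightarrow> smooth_on U (pd_s F)"
  and smooth_on_pd_t: "smooth_on U F \<Longrightarrow> smooth_on U (pd_t F)"
  using smooth_onD(3,4) smooth_on_open unfolding smooth_on_def by blast+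

lemma smooth_on_has_vector_derivative_pd_s:
  assumes "smooth_on U F" "(s, t) \<in> U"
  shows "((\<lambda>\<sigma>. F (\<sigma>, t)) has_vector_derivative pd_s F (s, t)) (at s)"
  using smooth_onD(2)[OF assms(1)] assms(2) unfolding pd_s_def
  by (fastforce simp: vector_derivative_works)

lemma smooth_on_has_vector_derivative_pd_t:
  assumes "smooth_on U F" "(s, t) \<in> U"
  shows "((\<lambda>\<tau>. F (s, \<tau>)) has_vector_derivative pd_t F (s, t)) (at t)"
  using smooth_onD(2)[OF assms(1)] assms(2) unfolding pd_t_def
  by (fastforce simp: vector_derivative_works)

lemma continuous_on_slice_s:
  assumes "continuous_on U F" "{a..b} \<times> {t} \<subseteq> U"
  shows "continuous_on {a..b} (\<lambda>\<sigma>. F (\<sigma>, t))"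
  by (rule continuous_on_compose2[OF assms(1)]) (use assms(2) in \<open>auto intro!: continuous_intros\<close>)

lemma pd_t_eq_integral_pd_t_pd_s:
  fixes F :: "real \<times> real \<Rightarrow> 'a::banach"
  assumes F: "smooth_on U F" and box: "{a..b} \<times> J \<subseteq> U"
    and J: "open J" "convex J" "t \<in> J" and s: "s \<in> {a..b}"
  shows "pd_t F (s, t) = pd_t F (a, t) + integral {a..s} (\<lambda>\<sigma>. pd_t (pd_s F) (\<sigma>, t))"
proof -
  have box_s: "{a..s} \<times> J \<subseteq> U" using box s by auto
  have integral_pd_s: "integral {a..s} (\<lambda>\<sigma>. pd_s F (\<sigma>, \<tau>)) = F (s, \<tau>) - F (a, \<tau>)" if "\<tau> \<in> J" for \<tau>
    using s box_s that
    by (intro integral_unique fundamental_theorem_of_calculus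
        has_vector_derivative_at_within[OF smooth_on_has_vector_derivative_pd_s[OF F]]) auto
  have "((\<lambda>\<tau>. integral (cbox a s) (\<lambda>\<sigma>. pd_s F (\<sigma>, \<tau>))) has_vector_derivative
          integral (cbox a s) (\<lambda>\<sigma>. pd_t (pd_s F) (\<sigma>, t))) (at t within J)"
  proof (rule leibniz_rule_vector_derivative)
    fix \<tau> \<sigma> assume "\<tau> \<in> J" "\<sigma> \<in> cbox a s"
    then show "((\<lambda>\<tau>. pd_s F (\<sigma>, \<tau>)) has_vector_derivative pd_t (pd_s F) (\<sigma>, \<tau>)) (at \<tau> within J)"
      using box_s by (intro has_vector_derivative_at_within
          [OF smooth_on_has_vector_derivative_pd_t[OF smooth_on_pd_s[OF F]]]) auto
  next
    fix \<tau> assume "\<tau> \<in> J"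
    then have "continuous_on {a..s} (\<lambda>\<sigma>. pd_s F (\<sigma>, \<tau>))"
      using box_s by (intro continuous_on_slice_s[OF smooth_on_continuous_on[OF smooth_on_pd_s[OF F]]]) auto
    then show "(\<lambda>\<sigma>. pd_s F (\<sigma>, \<tau>)) integrable_on cbox a s"
      by (simp add: integrable_continuous_real)
  next
    have "continuous_on U (pd_t (pd_s F))"
      by (rule smooth_on_continuous_on[OF smooth_on_pd_t[OF smooth_on_pd_s[OF F]]])
    then show "continuous_on (J \<times> cbox a s) (\<lambda>(\<tau>, \<sigma>). pd_t (pd_s F) (\<sigma>, \<tau>))"
      unfolding case_prod_unfold
      by (rule continuous_on_compose2) (use box_s in \<open>auto intro!: continuous_intros\<close>)
  qed (use J in auto)
  then have "((\<lambda>\<tau>. integral {a..s} (\<lambda>\<sigma>. pd_s F (\<sigma>, \<tau>))) has_vector_derivative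
               integral {a..s} (\<lambda>\<sigma>. pd_t (pd_s F) (\<sigma>, t))) (at t)"
    by (simp only: cbox_interval at_within_open[OF J(3) J(1)])
  then have "((\<lambda>\<tau>. F (s, \<tau>) - F (a, \<tau>)) has_vector_derivative
               integral {a..s} (\<lambda>\<sigma>. pd_t (pd_s F) (\<sigma>, t))) (at t)"
    by (rule has_vector_derivative_transform_within_open[OF _ J(1) J(3)]) (simp add: integral_pd_s)
  moreover have "((\<lambda>\<tau>. F (s, \<tau>) - F (a, \<tau>)) has_vector_derivative pd_t F (s, t) - pd_t F (a, t)) (at t)"
    using s box J by (intro has_vector_derivative_diff smooth_on_has_vector_derivative_pd_t[OF F]) auto
  ultimately have "pd_t F (s, t) - pd_t F (a, t) = integral {a..s} (\<lambda>\<sigma>. pd_t (pd_s F) (\<sigma>, t))"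
    by (rule vector_derivative_unique_at[rotated])
  then show ?thesis
    by (simp add: algebra_simps)
qed

text \<open>Clairaut: both sides are the \<open>s\<close>-derivative of \<open>\<sigma> \<mapsto> pd_t F (\<sigma>, t)\<close>, which near \<open>s\<close>
  is an indefinite integral of \<open>pd_t (pd_s F)\<close>.\<close>

lemma pd_s_pd_t_commute:
  fixes F :: "real \<times> real \<Rightarrow> 'a::banach"
  assumes F: "smooth_on U F" and p: "(s, t) \<in> U"
  shows "pd_s (pd_t F) (s, t) = pd_t (pd_s F) (s, t)"
proof -
  obtain A B where AB: "open A" "open B" "(s, t) \<in> A \<times> B" "A \<times> B \<subseteq> U"
    using open_prod_elim[OF smooth_on_open[OF F] p] .
  obtain r where r: "r > 0" "ball s r \<subseteq> A"
    using AB(3) openE[OF AB(1)] by blast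
  obtain \<rho> where \<rho>: "\<rho> > 0" "ball t \<rho> \<subseteq> B"
    using AB(3) openE[OF AB(2)] by blast
  define a where "a = s - r / 2"
  define b where "b = s + r / 2"
  have ab: "s \<in> {a<..<b}" "{a..b} \<subseteq> A"
    using r unfolding a_def b_def by (auto simp: subset_eq dist_real_def)
  have box: "{a..b} \<times> ball t \<rho> \<subseteq> U" using ab(2) \<rho>(2) AB(4) by auto
  have cont: "continuous_on {a..b} (\<lambda>\<sigma>. pd_t (pd_s F) (\<sigma>, t))"
    using box \<rho>(1)
    by (intro continuous_on_slice_s[OF smooth_on_continuous_on[OF smooth_on_pd_t[OF smooth_on_pd_s[OF F]]]]) auto
  have integral_deriv: "((\<lambda>\<sigma>. integral {a..\<sigma>} (\<lambda>\<sigma>'. pd_t (pd_s F) (\<sigma>', t)))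
          has_vector_derivative pd_t (pd_s F) (s, t)) (at s within {a<..<b})"
    using ab(1) by (intro has_vector_derivative_within_subset[OF integral_has_vector_derivative[OF cont]]) auto
  have "((\<lambda>\<sigma>. pd_t F (a, t) + integral {a..\<sigma>} (\<lambda>\<sigma>'. pd_t (pd_s F) (\<sigma>', t)))
          has_vector_derivative pd_t (pd_s F) (s, t)) (at s)"
    using has_vector_derivative_add[OF has_vector_derivative_const integral_deriv]
    unfolding at_within_open[OF ab(1) open_greaterThanLessThan] by simp
  then have "((\<lambda>\<sigma>. pd_t F (\<sigma>, t)) has_vector_derivative pd_t (pd_s F) (s, t)) (at s)"
  proof (rule has_vector_derivative_transform_within_open[OF _ open_greaterThanLessThan ab(1)])
    fix \<sigma> :: real assume "\<sigma> \<in> {a<..<b}"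
    then show "pd_t F (a, t) + integral {a..\<sigma>} (\<lambda>\<sigma>'. pd_t (pd_s F) (\<sigma>', t)) = pd_t F (\<sigma>, t)"
      using pd_t_eq_integral_pd_t_pd_s[OF F box open_ball convex_ball, where s=\<sigma>] \<rho>(1) by simp
  qed
  then show ?thesis
    using smooth_on_has_vector_derivative_pd_s[OF smooth_on_pd_t[OF F] p] vector_derivative_unique_at by blast
qed

lemma lor_commute: "lor x y = lor y x"
  unfolding lor_def by (simp add: algebra_simps)

lemma bounded_bilinear_lor: "bounded_bilinear lor"
proof -
  have "linear (lor x)" "linear (\<lambda>y. lor y x)" for x
    by (auto intro!: linearI simp: lor_def algebra_simps)
  then show ?thesis
    by (simp add: bilinear_def flip: bilinear_conv_bounded_bilinear)
qed

interpretation lor: bounded_bilinear lor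
  by (rule bounded_bilinear_lor)

lemma pd_s_lor:
  assumes "smooth_on U F" "smooth_on U G" "(s, t) \<in> U"
  shows "pd_s (\<lambda>q. lor (F q) (G q)) (s, t) = lor (pd_s F (s, t)) (G (s, t)) + lor (F (s, t)) (pd_s G (s, t))"
proof -
  have "((\<lambda>\<sigma>. lor (F (\<sigma>, t)) (G (\<sigma>, t))) has_vector_derivative
          lor (F (s, t)) (pd_s G (s, t)) + lor (pd_s F (s, t)) (G (s, t))) (at s)"
    by (rule lor.has_vector_derivative[OF smooth_on_has_vector_derivative_pd_s[OF assms(1,3)]
          smooth_on_has_vector_derivative_pd_s[OF assms(2,3)]])
  then show ?thesis
    unfolding pd_s_def[of "\<lambda>q. lor (F q) (G q)"] by (simp add: vector_derivative_at add.commute)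
qed

lemma has_vector_derivative_unique_on:
  fixes f g :: "real \<Rightarrow> 'a::real_normed_vector"
  assumes "at x within S \<noteq> bot" "x \<in> S" "\<And>y. y \<in> S \<Longrightarrow> f y = g y"
    and "(f has_vector_derivative f') (at x)" "(g has_vector_derivative g') (at x)"
  shows "f' = g'"
proof (rule vector_derivative_unique_within[OF assms(1)])
  show "(g has_vector_derivative f') (at x within S)"
    using has_vector_derivative_transform[OF assms(2) _ has_vector_derivative_at_within[OF assms(4)]] assms(3)
    by simp
qed (rule has_vector_derivative_at_within[OF assms(5)])

text \<open>The identities are only assumed on \<open>D\<close>, which need not be open; nontrivial coordinate
  slices still determine the partial derivatives at its boundary points.\<close>

locale partially_null_family =
  fixes U D :: "(real \<times> real) set"
    and \<gamma> T N B1 B2 :: "real \<times> real \<Rightarrow> real^4"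
    and k1 k2 \<beta>1 \<beta>2 \<beta>3 \<beta>4 :: "real \<times> real \<Rightarrow> real"
  assumes D_subset_U: "D \<subseteq> U"
    and s_slice_nontrivial: "(s, t) \<in> D \<Longrightarrow> at s within {\<sigma>. (\<sigma>, t) \<in> D} \<noteq> bot"
    and t_slice_nontrivial: "(s, t) \<in> D \<Longrightarrow> at t within {\<tau>. (s, \<tau>) \<in> D} \<noteq> bot"
    and smooth: "smooth_on U \<gamma>" "smooth_on U T" "smooth_on U N" "smooth_on U B1" "smooth_on U B2"
      "smooth_on U k1" "smooth_on U k2" "smooth_on U \<beta>1" "smooth_on U \<beta>2" "smooth_on U \<beta>3" "smooth_on U \<beta>4"
    and tangent: "p \<in> D \<Longrightarrow> T p = pd_s \<gamma> p"
    and frame: "p \<in> D \<Longrightarrow> lor (T p) (B1 p) = 0" "p \<in> D \<Longrightarrow> lor (N p) (B1 p) = 0"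
      "p \<in> D \<Longrightarrow> lor (B1 p) (B1 p) = 0" "p \<in> D \<Longrightarrow> lor (B1 p) (B2 p) = 1"
    and frenet: "p \<in> D \<Longrightarrow> pd_s T p = k1 p *\<^sub>R N p"
      "p \<in> D \<Longrightarrow> pd_s N p = - k1 p *\<^sub>R T p + k2 p *\<^sub>R B1 p"
      "p \<in> D \<Longrightarrow> pd_s B1 p = 0"
      "p \<in> D \<Longrightarrow> pd_s B2 p = - k2 p *\<^sub>R N p"
    and variation: "p \<in> D \<Longrightarrow> pd_t \<gamma> p = \<beta>1 p *\<^sub>R T p + \<beta>2 p *\<^sub>R N p + \<beta>3 p *\<^sub>R B1 p + \<beta>4 p *\<^sub>R B2 p"
begin

lemma has_vector_derivative_pd_s:
  "smooth_on U F \<Longrightarrow> (s, t) \<in> D \<Longrightarrow> ((\<lambda>\<sigma>. F (\<sigma>, t)) has_vector_derivative pd_s F (s, t)) (at s)"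
  using D_subset_U by (blast intro: smooth_on_has_vector_derivative_pd_s)

lemma has_vector_derivative_pd_t:
  "smooth_on U F \<Longrightarrow> (s, t) \<in> D \<Longrightarrow> ((\<lambda>\<tau>. F (s, \<tau>)) has_vector_derivative pd_t F (s, t)) (at t)"
  using D_subset_U by (blast intro: smooth_on_has_vector_derivative_pd_t)

lemma s_derivative_unique:
  assumes "(s, t) \<in> D" "\<And>\<sigma>. (\<sigma>, t) \<in> D \<Longrightarrow> f \<sigma> = g \<sigma>"
    and "(f has_vector_derivative f') (at s)" "(g has_vector_derivative g') (at s)"
  shows "f' = g'"
  using has_vector_derivative_unique_on[OF s_slice_nontrivial[OF assms(1)]] assms by auto

lemma t_derivative_unique:
  assumes "(s, t) \<in> D" "\<And>\<tau>. (s, \<tau>) \<in> D \<Longrightarrow> f \<tau> = g \<tau>"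
    and "(f has_vector_derivative f') (at t)" "(g has_vector_derivative g') (at t)"
  shows "f' = g'"
  using has_vector_derivative_unique_on[OF t_slice_nontrivial[OF assms(1)]] assms by auto

lemma lor_pd_t_of_constant_lor:
  assumes X: "smooth_on U X" and Y: "smooth_on U Y" and p: "(s, t) \<in> D"
    and const: "\<And>q. q \<in> D \<Longrightarrow> lor (X q) (Y q) = c"
  shows "lor (X (s, t)) (pd_t Y (s, t)) + lor (pd_t X (s, t)) (Y (s, t)) = 0"
  by (rule t_derivative_unique[OF p _ lor.has_vector_derivative has_vector_derivative_const])
    (use const has_vector_derivative_pd_t[OF _ p] X Y in auto)

lemma lor_pd_t_B1_B1: "(s, t) \<in> D \<Longrightarrow> lor (pd_t B1 (s, t)) (B1 (s, t)) = 0"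
  using lor_pd_t_of_constant_lor[OF smooth(4) smooth(4) _ frame(3)] by (simp add: lor_commute)

lemma lor_pd_t_N_B1: "(s, t) \<in> D \<Longrightarrow> lor (pd_t N (s, t)) (B1 (s, t)) = - lor (pd_t B1 (s, t)) (N (s, t))"
  using lor_pd_t_of_constant_lor[OF smooth(3) smooth(4) _ frame(2)]
  by (metis lor_commute add.commute eq_neg_iff_add_eq_0)

lemma has_vector_derivative_scaleR_pd_s:
  assumes "smooth_on U f" "smooth_on U X" "(s, t) \<in> D"
  shows "((\<lambda>\<sigma>. f (\<sigma>, t) *\<^sub>R X (\<sigma>, t)) has_vector_derivative
           f (s, t) *\<^sub>R pd_s X (s, t) + pd_s f (s, t) *\<^sub>R X (s, t)) (at s)"
  by (rule bounded_bilinear.has_vector_derivative[OF bounded_bilinear_scaleR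
        has_vector_derivative_pd_s[OF assms(1,3)] has_vector_derivative_pd_s[OF assms(2,3)]])

lemma has_vector_derivative_scaleR_pd_t:
  assumes "smooth_on U f" "smooth_on U X" "(s, t) \<in> D"
  shows "((\<lambda>\<tau>. f (s, \<tau>) *\<^sub>R X (s, \<tau>)) has_vector_derivative
           f (s, t) *\<^sub>R pd_t X (s, t) + pd_t f (s, t) *\<^sub>R X (s, t)) (at t)"
  by (rule bounded_bilinear.has_vector_derivative[OF bounded_bilinear_scaleR
        has_vector_derivative_pd_t[OF assms(1,3)] has_vector_derivative_pd_t[OF assms(2,3)]])

lemma pd_t_pd_s_N:
  assumes p: "(s, t) \<in> D"
  shows "pd_t (pd_s N) (s, t) = (k2 (s, t) *\<^sub>R pd_t B1 (s, t) + pd_t k2 (s, t) *\<^sub>R B1 (s, t))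
                               - (k1 (s, t) *\<^sub>R pd_t T (s, t) + pd_t k1 (s, t) *\<^sub>R T (s, t))"
  by (rule t_derivative_unique[OF p _ has_vector_derivative_pd_t[OF smooth_on_pd_s[OF smooth(3)] p]
        has_vector_derivative_diff[OF has_vector_derivative_scaleR_pd_t has_vector_derivative_scaleR_pd_t]])
    (use frenet(2) p smooth in auto)

lemma pd_t_pd_s_B1: "(s, t) \<in> D \<Longrightarrow> pd_t (pd_s B1) (s, t) = 0"
  by (rule t_derivative_unique[OF _ _ has_vector_derivative_pd_t[OF smooth_on_pd_s[OF smooth(4)]]
        has_vector_derivative_const]) (auto simp: frenet(3))

lemma pd_t_T: "(s, t) \<in> D \<Longrightarrow> pd_t T (s, t) = pd_s (pd_t \<gamma>) (s, t)"
  using t_derivative_unique[OF _ _ has_vector_derivative_pd_t[OF smooth(2)]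
        has_vector_derivative_pd_t[OF smooth_on_pd_s[OF smooth(1)]]] tangent
    pd_s_pd_t_commute[OF smooth(1)] D_subset_U by auto

lemma pd_s_pd_t_gamma:
  assumes p: "(s, t) \<in> D"
  shows "pd_s (pd_t \<gamma>) (s, t) =
           (\<beta>1 (s, t) *\<^sub>R pd_s T (s, t) + pd_s \<beta>1 (s, t) *\<^sub>R T (s, t))
         + (\<beta>2 (s, t) *\<^sub>R pd_s N (s, t) + pd_s \<beta>2 (s, t) *\<^sub>R N (s, t))
         + (\<beta>3 (s, t) *\<^sub>R pd_s B1 (s, t) + pd_s \<beta>3 (s, t) *\<^sub>R B1 (s, t))
         + (\<beta>4 (s, t) *\<^sub>R pd_s B2 (s, t) + pd_s \<beta>4 (s, t) *\<^sub>R B2 (s, t))"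
  by (rule s_derivative_unique[OF p _ has_vector_derivative_pd_s[OF smooth_on_pd_t[OF smooth(1)] p]
        has_vector_derivative_add[OF has_vector_derivative_add[OF has_vector_derivative_add]]])
    (use variation p in \<open>auto intro: has_vector_derivative_scaleR_pd_s smooth\<close>)

lemma lor_pd_t_T_B1:
  assumes p: "(s, t) \<in> D"
  shows "lor (pd_t T (s, t)) (B1 (s, t)) = pd_s \<beta>4 (s, t)"
  using frame[OF p] frenet[OF p]
  by (simp add: pd_t_T[OF p] pd_s_pd_t_gamma[OF p] lor.add_left lor.diff_left lor.scaleR_left
      lor.minus_left lor_commute[of "B2 (s, t)"])

lemma pd_s_lor_pd_t_N_B1:
  assumes p: "(s, t) \<in> D"
  shows "pd_s (\<lambda>q. lor (pd_t N q) (B1 q)) (s, t) = - k1 (s, t) * pd_s \<beta>4 (s, t)"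
proof -
  have "pd_s (\<lambda>q. lor (pd_t N q) (B1 q)) (s, t) = lor (pd_t (pd_s N) (s, t)) (B1 (s, t))"
    using p D_subset_U pd_s_lor[OF smooth_on_pd_t[OF smooth(3)] smooth(4), of s t]
    by (auto simp: pd_s_pd_t_commute[OF smooth(3)] frenet(3)[OF p] lor.zero_left lor.zero_right)
  also have "\<dots> = - k1 (s, t) * lor (pd_t T (s, t)) (B1 (s, t))"
    using frame[OF p]
    by (simp add: pd_t_pd_s_N[OF p] lor_pd_t_B1_B1[OF p] lor.add_left lor.diff_left lor.scaleR_left lor.minus_left)
  finally show ?thesis
    by (simp add: lor_pd_t_T_B1[OF p])
qed

lemma pd_s_lor_pd_t_B1_B2:
  assumes p: "(s, t) \<in> D"
  shows "pd_s (\<lambda>q. lor (pd_t B1 q) (B2 q)) (s, t) = k2 (s, t) * lor (pd_t N (s, t)) (B1 (s, t))"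
proof -
  have "pd_s (\<lambda>q. lor (pd_t B1 q) (B2 q)) (s, t) = lor (pd_t B1 (s, t)) (pd_s B2 (s, t))"
    using p D_subset_U pd_s_lor[OF smooth_on_pd_t[OF smooth(4)] smooth(5), of s t]
    by (auto simp: pd_s_pd_t_commute[OF smooth(4)] pd_t_pd_s_B1[OF p] lor.zero_left lor.zero_right)
  then show ?thesis
    by (simp add: frenet(4)[OF p] lor_pd_t_N_B1[OF p] lor.minus_right lor.scaleR_right)
qed

end

theorem theorem3p8:
  fixes l w :: real
    and \<gamma> T N B1 B2 :: "real \<times> real \<Rightarrow> real^4"
    and k1 k2 k3 \<beta>1 \<beta>2 \<beta>3 \<beta>4 :: "real \<times> real \<Rightarrow> real"
    and U :: "(real \<times> real) set"
  defines "D \<equiv> {0..l} \<times> {0..<w}"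
  assumes lw: "0 < l" "0 < w"
    and U: "open U" "D \<subseteq> U"
    and smooth: "smooth_on U \<gamma>" "smooth_on U T" "smooth_on U N" "smooth_on U B1" "smooth_on U B2"
      "smooth_on U k1" "smooth_on U k2" "smooth_on U k3"
      "smooth_on U \<beta>1" "smooth_on U \<beta>2" "smooth_on U \<beta>3" "smooth_on U \<beta>4"
    and arclength: "\<forall>p\<in>D. lnorm (pd_s \<gamma> p) = 1"
    and tangent: "\<forall>p\<in>D. T p = pd_s \<gamma> p"
    and frame: "\<forall>p\<in>D. lor (T p) (T p) = 1 \<and> lor (N p) (N p) = 1 \<and>
                   lor (B1 p) (B1 p) = 0 \<and> lor (B2 p) (B2 p) = 0 \<and> lor (B1 p) (B2 p) = 1 \<and>
                   lor (T p) (N p) = 0 \<and> lor (T p) (B1 p) = 0 \<and> lor (T p) (B2 p) = 0 \<and>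
                   lor (N p) (B1 p) = 0 \<and> lor (N p) (B2 p) = 0"
    and frenet: "\<forall>p\<in>D. pd_s T p = k1 p *\<^sub>R N p \<and>
                    pd_s N p = - k1 p *\<^sub>R T p + k2 p *\<^sub>R B1 p \<and>
                    pd_s B1 p = k3 p *\<^sub>R B1 p \<and>
                    pd_s B2 p = - k2 p *\<^sub>R N p - k3 p *\<^sub>R B2 p"
    and k3: "\<forall>p\<in>D. k3 p = 0"
    and inextensible: "\<forall>p\<in>D. pd_t (\<lambda>q. lnorm (pd_s \<gamma> q)) p = 0"
    and variation: "\<forall>p\<in>D. pd_t \<gamma> p = \<beta>1 p *\<^sub>R T p + \<beta>2 p *\<^sub>R N p + \<beta>3 p *\<^sub>R B1 p + \<beta>4 p *\<^sub>R B2 p"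
  shows "\<forall>p\<in>D.
           (pd_s \<beta>4 p \<noteq> 0 \<longrightarrow>
              k1 p = - pd_s (\<lambda>q. lor (pd_t N q) (B1 q)) p / pd_s \<beta>4 p) \<and>
           (lor (pd_t N p) (B1 p) \<noteq> 0 \<longrightarrow>
              k2 p = (1 / lor (pd_t N p) (B1 p)) * pd_s (\<lambda>q. lor (pd_t B1 q) (B2 q)) p)"
proof -
  have slices: "{\<sigma>. (\<sigma>, t) \<in> D} = {0..l}" "{\<tau>. (s, \<tau>) \<in> D} = {0..<w}" if "(s, t) \<in> D" for s t
    using that unfolding D_def by auto
  interpret partially_null_family U D \<gamma> T N B1 B2 k1 k2 \<beta>1 \<beta>2 \<beta>3 \<beta>4
  proof
    fix s t assume "(s, t) \<in> D"
    then show "at s within {\<sigma>. (\<sigma>, t) \<in> D} \<noteq> bot" "at t within {\<tau>. (s, \<tau>) \<in> D} \<noteq> bot"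
      using lw slices unfolding D_def by (auto simp: trivial_limit_within)
  qed (use U smooth tangent frame frenet k3 variation in auto)
  show ?thesis
  proof
    fix p assume "p \<in> D"
    then obtain s t where "p = (s, t)" "(s, t) \<in> D" by (cases p) auto
    then show "(pd_s \<beta>4 p \<noteq> 0 \<longrightarrow> k1 p = - pd_s (\<lambda>q. lor (pd_t N q) (B1 q)) p / pd_s \<beta>4 p) \<and>
      (lor (pd_t N p) (B1 p) \<noteq> 0 \<longrightarrow>
         k2 p = (1 / lor (pd_t N p) (B1 p)) * pd_s (\<lambda>q. lor (pd_t B1 q) (B2 q)) p)"
      by (simp add: pd_s_lor_pd_t_N_B1 pd_s_lor_pd_t_B1_B2)
  qed
qed

end
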